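(* Let $\mathcal H$ and $\mathcal H'$ be the rank-one-root affine Hecke algebras described in the context. There is no algebra homomorphism $I:\mathcal H\to\mathcal H'$ such that $I(T_s)=c'\theta_{k(\alpha')^\vee}T_{s'}+b'$ for some $c'\in\mathbb C^\times$, $k\in\frac12\mathbb Z$ and $b'\in\mathbb C[Y']$, and $I(\theta_{\alpha^\vee})=c\,\theta_{n(\alpha')^\vee}$ for some $c\in\mathbb C^\times$ and positive half-integer $n\in\frac12+\mathbb Z$ (here $k(\alpha')^\vee,n(\alpha')^\vee\in Y'$).
   Context: Let $\mathcal R=(X,R=\{\pm\alpha\},Y,R^\vee=\{\pm\alpha^\vee\},\Delta=\{\alpha\})$ and $\mathcal R'=(X',\{\pm\alpha'\},Y',\{\pm(\alpha')^\vee\},\{\alpha'\})$ be based root data (free $\mathbb Z$-modules of finite rank in perfect pairing, $\langle\alpha,\alpha^\vee\rangle=2$). Let $\lambda(\alpha),\lambda^*(\alpha),\lambda'(\alpha'),(\lambda^* )'(\alpha')$ be positive reals with $\lambda(\alpha)=\lambda^*(\alpha)$ unless $\alpha\in2X$ and $\lambda'(\alpha')=(\lambda^* )'(\alpha')$ unless $\alpha'\in2X'$. Fix $\mathbf q>1$; $q_1=\mathbf q^{\lambda(\alpha)}$, $q_0=\mathbf q^{\lambda^*(\alpha)}$, $q_1'=\mathbf q^{\lambda'(\alpha')}$, $q_0'=\mathbf q^{(\lambda^* )'(\alpha')}$. $s=s_\alpha$, $s'=s_{\alpha'}$. $\mathcal H=\mathbb C[Y]\otimes\mathcal H(W_0,q)$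 with $\mathbb C[Y]$ (basis $\theta_y$) and $\operatorname{span}(1,T_s)$, $(T_s+1)(T_s-q_1)=0$, as subalgebras and $\theta_yT_s-T_s\theta_{s(y)}=\big((q_1-1)+\theta_{-\alpha^\vee}(q_1^{1/2}q_0^{1/2}-q_1^{1/2}q_0^{-1/2})\big)\frac{\theta_y-\theta_{s(y)}}{\theta_0-\theta_{-2\alpha^\vee}}$; $\mathcal H'$ likewise from $\mathcal R',q_1',q_0'$ with generator $T_{s'}$. *)

theory Defs
  imports "HOL-Analysis.Finite_Cartesian_Product" "HOL-Library.Poly_Mapping"
begin

text \<open>Lattices: Y = Z^r is modelled as int ^ 'r, X = Hom(Y,Z) is identified with int ^ 'r
  via the standard (perfect) pairing below.\<close>

definition lat_pair :: "int ^ ('r::finite) \<Rightarrow> int ^ 'r \<Rightarrow> int" where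
  "lat_pair x y = (\<Sum>i\<in>UNIV. x $ i * y $ i)"

definition refl_Y :: "int ^ ('r::finite) \<Rightarrow> int ^ 'r \<Rightarrow> int ^ 'r \<Rightarrow> int ^ 'r" where
  "refl_Y a av y = y - (lat_pair a y) *s av"

type_synonym 'r grpalg = "(int ^ 'r) \<Rightarrow>\<^sub>0 complex"

definition theta :: "int ^ ('r::finite) \<Rightarrow> 'r grpalg" where
  "theta y = Poly_Mapping.single y 1"

definition cst :: "complex \<Rightarrow> ('r::finite) grpalg" where
  "cst c = Poly_Mapping.single 0 c"

definition sact :: "int ^ ('r::finite) \<Rightarrow> int ^ 'r \<Rightarrow> 'r grpalg \<Rightarrow> 'r grpalg" where
  "sact a av f = (\<Sum>y\<in>Poly_Mapping.keys f. Poly_Mapping.single (refl_Y a av y) (Poly_Mapping.lookup f y))"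

text \<open>Bernstein operator: Bop f = ((q1-1) + theta(-av)(q1^(1/2)q0^(1/2) - q1^(1/2)q0^(-1/2)))
  (f - s f) / (theta 0 - theta(-2 av)), the quotient taken in the integral domain C[Y]
  (it is exact). So theta_y T_s - T_s theta_(s y) = Bop (theta_y).\<close>
definition bern_num :: "int ^ ('r::finite) \<Rightarrow> real \<Rightarrow> real \<Rightarrow> 'r grpalg" where
  "bern_num av q1 q0 = cst (complex_of_real (q1 - 1))
     + theta (- av) * cst (complex_of_real (sqrt q1 * sqrt q0 - sqrt q1 / sqrt q0))"

definition bern_den :: "int ^ ('r::finite) \<Rightarrow> 'r grpalg" where
  "bern_den av = theta 0 - theta (- ((2::int) *s av))"

definition Bop :: "int ^ ('r::finite) \<Rightarrow> int ^ 'r \<Rightarrow> real \<Rightarrow> real \<Rightarrow> 'r grpalg \<Rightarrow> 'r grpalg" where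
  "Bop a av q1 q0 f = (THE g. bern_den av * g = bern_num av q1 q0 * (f - sact a av f))"

text \<open>The affine Hecke algebra H = C[Y] (x) span(1,T_s): an element (f,g) stands for f + g T_s.
  Multiplication is the one forced by the relations
  (T_s+1)(T_s-q1)=0 and T_s f = s(f) T_s - Bop(s f).\<close>
type_synonym 'r hecke = "'r grpalg \<times> 'r grpalg"

definition H_mult :: "int ^ ('r::finite) \<Rightarrow> int ^ 'r \<Rightarrow> real \<Rightarrow> real \<Rightarrow> 'r hecke \<Rightarrow> 'r hecke \<Rightarrow> 'r hecke" where
  "H_mult a av q1 q0 x y = (case x of (f1, g1) \<Rightarrow> case y of (f2, g2) \<Rightarrow>
     (f1 * f2 - g1 * Bop a av q1 q0 (sact a av f2) + cst (complex_of_real q1) * g1 * sact a av g2,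
      f1 * g2 + g1 * sact a av f2 + cst (complex_of_real (q1 - 1)) * g1 * sact a av g2
        - g1 * Bop a av q1 q0 (sact a av g2)))"

definition H_add :: "('r::finite) hecke \<Rightarrow> 'r hecke \<Rightarrow> 'r hecke" where
  "H_add x y = (fst x + fst y, snd x + snd y)"

definition H_scale :: "complex \<Rightarrow> ('r::finite) hecke \<Rightarrow> 'r hecke" where
  "H_scale c x = (cst c * fst x, cst c * snd x)"

definition H_one :: "('r::finite) hecke" where
  "H_one = (1, 0)"

definition H_of :: "('r::finite) grpalg \<Rightarrow> 'r hecke" where
  "H_of f = (f, 0)"

definition H_T :: "('r::finite) hecke" where
  "H_T = (0, 1)"

definition hecke_alg_hom ::
  "int ^ ('r::finite) \<Rightarrow> int ^ 'r \<Rightarrow> real \<Rightarrow> real \<Rightarrow> int ^ ('s::finite) \<Rightarrow> int ^ 's \<Rightarrow> real \<Rightarrow> real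
     \<Rightarrow> ('r hecke \<Rightarrow> 's hecke) \<Rightarrow> bool" where
  "hecke_alg_hom a av q1 q0 a' av' q1' q0' I \<longleftrightarrow>
     (\<forall>x y. I (H_add x y) = H_add (I x) (I y)) \<and>
     (\<forall>c x. I (H_scale c x) = H_scale c (I x)) \<and>
     (\<forall>x y. I (H_mult a av q1 q0 x y) = H_mult a' av' q1' q0' (I x) (I y)) \<and>
     I H_one = H_one"

end

theory Submission
  imports Defs
begin

text \<open>Put t = \<theta>(\<alpha>\<or>) and T = T_s. The Bernstein relation in H gives
  t T t = T + (q1 - 1) t^2 + d t with d = \<surd>q1 (\<surd>q0 - 1/\<surd>q0) \<noteq> 0.
  Apply I, with t \<mapsto> c \<theta>(y) (2y = N\<alpha>'\<or>, N odd) and T \<mapsto> c' \<theta>(z) T' + b' (2z = K\<alpha>'\<or>).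
  As \<langle>\<alpha>', y\<rangle> = N is odd, \<alpha>' is not in 2X', so H' has equal parameters q' and the
  Bernstein quotient of \<theta>(-y) is (q' - 1) times the geometric sum of the N terms \<theta>(y - j\<alpha>'\<or>).
  The T'-components of the image of the relation give c^2 = 1; evaluating the C[Y']-components at a
  character \<chi> of Y' with \<chi>(\<alpha>'\<or>) = 1 and \<chi>(y)^2 = 1 then gives
  c' (q' - 1) N \<chi>(z) = (q1 - 1) + d c \<chi>(y).
  For the trivial character and for the parity character \<chi>(x) = (-1)^\<langle>\<alpha>', x\<rangle>,
  the two equations force d c = 0 if K is even and q1 = 1 if K is odd.\<close>

lemma lat_pair_add_left: "lat_pair (x + x') y = lat_pair x y + lat_pair x' y"
  by (simp add: lat_pair_def algebra_simps sum.distrib)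

lemma lat_pair_add_right: "lat_pair x (y + y') = lat_pair x y + lat_pair x y'"
  by (simp add: lat_pair_def algebra_simps sum.distrib)

lemma lat_pair_smult_right: "lat_pair x (k *s y) = k * lat_pair x y"
  by (simp add: lat_pair_def sum_distrib_left mult_ac)

lemma lat_pair_uminus_right: "lat_pair x (- y) = - lat_pair x y"
  by (simp add: lat_pair_def sum_negf)

lemma lat_pair_zero_right: "lat_pair x 0 = 0"
  by (simp add: lat_pair_def)

lemma coroot_nonzero: "lat_pair x v = 2 \<Longrightarrow> v \<noteq> 0"
  by (auto simp: lat_pair_zero_right)

lemma lat_pair_half:
  assumes "lat_pair x v = 2" and "y + y = k *s v"
  shows "lat_pair x y = k"
proof -
  have "lat_pair x y + lat_pair x y = k * 2"
    using assms by (metis lat_pair_add_right lat_pair_smult_right)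
  then show ?thesis
    by linarith
qed

lemma not_double_if_lat_pair_odd:
  assumes "odd (lat_pair x y)"
  shows "\<not> (\<exists>z. x = z + z)"
proof
  assume "\<exists>z. x = z + z"
  then obtain z where "x = z + z"
    by blast
  then have "lat_pair x y = lat_pair z y + lat_pair z y"
    by (simp only: lat_pair_add_left)
  with assms show False
    by presburger
qed

lemma refl_Y_eq_uminus:
  assumes "lat_pair a av = 2" and "y + y = k *s av"
  shows "refl_Y a av y = - y"
proof -
  have "refl_Y a av y = y - (y + y)"
    unfolding refl_Y_def lat_pair_half[OF assms] assms(2) ..
  then show ?thesis
    by (simp add: algebra_simps)
qed

lemma poly_mapping_sum_single:
  "f = (\<Sum>y\<in>Poly_Mapping.keys f. Poly_Mapping.single y (Poly_Mapping.lookup f y))"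
  by (rule poly_mapping_eqI) (simp add: lookup_sum lookup_single when_def sum.delta' in_keys_iff)

lemma lookup_single_mult:
  fixes h :: "('r::finite) grpalg"
  shows "Poly_Mapping.lookup (Poly_Mapping.single w c * h) y = c * Poly_Mapping.lookup h (y - w)"
proof -
  have "Poly_Mapping.single w c * h =
      (\<Sum>x\<in>Poly_Mapping.keys h. Poly_Mapping.single (w + x) (c * Poly_Mapping.lookup h x))"
    by (subst poly_mapping_sum_single[of h]) (simp add: sum_distrib_left mult_single)
  moreover have "(w + x = y) = (x = y - w)" for x :: "int ^ 'r"
    by (auto simp: algebra_simps)
  ultimately show ?thesis
    by (simp add: lookup_sum lookup_single when_def sum.delta' in_keys_iff)
qed

lemma theta_mult: "theta x * theta y = theta (x + y)"
  by (simp add: theta_def mult_single)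

lemma theta_zero: "theta 0 = 1"
  by (simp add: theta_def)

lemma cst_theta: "cst c * theta y = Poly_Mapping.single y c"
  by (simp add: theta_def cst_def mult_single)

lemma theta_geometric_sum:
  "(1 - theta (- v)) * (\<Sum>j<n. theta (y - int j *s v)) = theta y - theta (y - int n *s v)"
proof -
  have "- v + (y - int j *s v) = y - int (Suc j) *s v" for j
    by (simp add: vec_eq_iff algebra_simps)
  then have "theta (- v) * theta (y - int j *s v) = theta (y - int (Suc j) *s v)" for j
    by (simp only: theta_mult)
  then have "(1 - theta (- v)) * (\<Sum>j<n. theta (y - int j *s v)) =
      (\<Sum>j<n. theta (y - int j *s v) - theta (y - int (Suc j) *s v))"
    by (simp add: left_diff_distrib sum_distrib_left sum_subtractf)
  also have "\<dots> = theta y - theta (y - int n *s v)"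
    by (subst sum_lessThan_telescope') simp
  finally show ?thesis .
qed

lemma theta_diff_mult_eq_0D:
  fixes h :: "('r::finite) grpalg"
  assumes "w \<noteq> 0" and "(theta 0 - theta w) * h = 0"
  shows "h = 0"
proof -
  have "Poly_Mapping.single w 1 * h = h"
    using assms(2) by (simp add: algebra_simps theta_def)
  then have shift: "Poly_Mapping.lookup h (x + w) = Poly_Mapping.lookup h x" for x
    using lookup_single_mult[of w 1 h "x + w"] by simp
  have keys: "(\<lambda>x. x + w) ` Poly_Mapping.keys h = Poly_Mapping.keys h"
  proof (intro equalityI subsetI)
    fix y assume "y \<in> Poly_Mapping.keys h"
    then show "y \<in> (\<lambda>x. x + w) ` Poly_Mapping.keys h"
      using shift[of "y - w"] by (intro image_eqI[of _ _ "y - w"]) (simp_all add: in_keys_iff)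
  qed (use shift in \<open>auto simp: in_keys_iff\<close>)
  \<comment> \<open>a finite set invariant under translation by w \<noteq> 0 is empty\<close>
  obtain i where i: "w $ i \<noteq> 0"
    using assms(1) by (metis vec_eq_iff zero_index)
  have "(\<Sum>x\<in>Poly_Mapping.keys h. x $ i) = (\<Sum>x\<in>Poly_Mapping.keys h. (x + w) $ i)"
    by (subst (1) keys[symmetric]) (simp add: sum.reindex inj_on_def)
  also have "\<dots> = (\<Sum>x\<in>Poly_Mapping.keys h. x $ i) + of_nat (card (Poly_Mapping.keys h)) * w $ i"
    by (simp add: sum.distrib)
  finally have "card (Poly_Mapping.keys h) = 0"
    using i by simp
  then show "h = 0"
    by simp
qed

definition char_eval :: "(int ^ 'r \<Rightarrow> complex) \<Rightarrow> ('r::finite) grpalg \<Rightarrow> complex" where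
  "char_eval ch f = (\<Sum>y\<in>Poly_Mapping.keys f. Poly_Mapping.lookup f y * ch y)"

lemma char_eval_eq_sum_superset:
  assumes "finite A" and "Poly_Mapping.keys f \<subseteq> A"
  shows "char_eval ch f = (\<Sum>y\<in>A. Poly_Mapping.lookup f y * ch y)"
  unfolding char_eval_def
  by (rule sum.mono_neutral_left) (use assms in \<open>auto simp: in_keys_iff\<close>)

lemma char_eval_add: "char_eval ch (f + g) = char_eval ch f + char_eval ch g"
proof -
  let ?A = "Poly_Mapping.keys f \<union> Poly_Mapping.keys g"
  have "Poly_Mapping.keys (f + g) \<subseteq> ?A"
    by (auto simp: in_keys_iff lookup_add)
  then show ?thesis
    by (simp add: char_eval_eq_sum_superset[of ?A] lookup_add distrib_right sum.distrib)
qed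

lemma char_eval_sum: "char_eval ch (\<Sum>j\<in>J. F j) = (\<Sum>j\<in>J. char_eval ch (F j))"
  by (induction J rule: infinite_finite_induct) (simp_all add: char_eval_add char_eval_def[of ch 0])

lemma char_eval_single: "char_eval ch (Poly_Mapping.single y c) = c * ch y"
  by (simp add: char_eval_def)

lemma char_eval_mult:
  assumes "\<And>x y. ch (x + y) = ch x * ch y"
  shows "char_eval ch (f * g) = char_eval ch f * char_eval ch g"
proof -
  have "f * g = (\<Sum>x\<in>Poly_Mapping.keys f. Poly_Mapping.single x (Poly_Mapping.lookup f x)) *
      (\<Sum>y\<in>Poly_Mapping.keys g. Poly_Mapping.single y (Poly_Mapping.lookup g y))"
    by (simp only: poly_mapping_sum_single[symmetric])
  also have "\<dots> = (\<Sum>x\<in>Poly_Mapping.keys f. \<Sum>y\<in>Poly_Mapping.keys g.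
      Poly_Mapping.single (x + y) (Poly_Mapping.lookup f x * Poly_Mapping.lookup g y))"
    by (simp add: sum_product mult_single)
  finally have "char_eval ch (f * g) = (\<Sum>x\<in>Poly_Mapping.keys f. \<Sum>y\<in>Poly_Mapping.keys g.
      Poly_Mapping.lookup f x * Poly_Mapping.lookup g y * ch (x + y))"
    by (simp add: char_eval_sum char_eval_single)
  then show ?thesis
    by (simp add: assms char_eval_def sum_product mult_ac)
qed

lemma char_eval_theta_geometric_sum:
  assumes "\<And>x y. ch (x + y) = ch x * ch y" and "ch (- v) = 1"
  shows "char_eval ch (\<Sum>j<n. theta (y - int j *s v)) = of_nat n * ch y"
proof -
  have "ch (y - int j *s v) = ch y" for j
  proof (induction j)
    case (Suc j)
    have "y - int (Suc j) *s v = (y - int j *s v) + - v"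
      by (simp add: vec_eq_iff algebra_simps)
    then show ?case
      by (simp only: assms Suc.IH mult_1_right)
  qed simp
  then show ?thesis
    by (simp add: char_eval_sum theta_def char_eval_single)
qed

definition parity_char :: "int ^ ('r::finite) \<Rightarrow> int ^ 'r \<Rightarrow> complex" where
  "parity_char x y = (if even (lat_pair x y) then 1 else -1)"

lemma parity_char_add: "parity_char x (y + z) = parity_char x y * parity_char x z"
  by (simp add: parity_char_def lat_pair_add_right)

lemma sact_single: "sact a av (Poly_Mapping.single y c) = Poly_Mapping.single (refl_Y a av y) c"
  by (cases "c = 0") (simp_all add: sact_def)

lemma sact_zero: "sact a av 0 = 0"
  by (simp add: sact_def)

definition bern_coeff :: "real \<Rightarrow> real \<Rightarrow> complex" where
  "bern_coeff q1 q0 = complex_of_real (sqrt q1 * sqrt q0 - sqrt q1 / sqrt q0)"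

lemma bern_num_bern_coeff:
  "bern_num av q1 q0 = cst (complex_of_real (q1 - 1)) + theta (- av) * cst (bern_coeff q1 q0)"
  by (simp add: bern_num_def bern_coeff_def)

lemma bern_coeff_diag:
  assumes "q > 0"
  shows "bern_coeff q q = complex_of_real (q - 1)"
  using assms by (simp add: bern_coeff_def)

lemma bern_coeff_nonzero:
  assumes "q1 > 0" and "q0 > 1"
  shows "bern_coeff q1 q0 \<noteq> 0"
proof -
  have "1 / sqrt q0 < sqrt q0"
    using assms(2) by (simp add: field_simps)
  then have "sqrt q1 / sqrt q0 < sqrt q1 * sqrt q0"
    using assms(1) mult_strict_left_mono[of "1 / sqrt q0" "sqrt q0" "sqrt q1"] by simp
  then show ?thesis
    unfolding bern_coeff_def of_real_eq_0_iff by linarith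
qed

lemma Bop_eqI:
  assumes "av \<noteq> 0" and "bern_den av * v = bern_num av q1 q0 * (f - sact a av f)"
  shows "Bop a av q1 q0 f = v"
  unfolding Bop_def
proof (rule the_equality)
  fix g assume "bern_den av * g = bern_num av q1 q0 * (f - sact a av f)"
  then have "(theta 0 - theta (- ((2::int) *s av))) * (g - v) = 0"
    using assms(2) by (simp add: bern_den_def right_diff_distrib)
  moreover have "- ((2::int) *s av) \<noteq> 0"
    using assms(1) by (simp add: vec_eq_iff)
  ultimately show "g = v"
    using theta_diff_mult_eq_0D by fastforce
qed (fact assms(2))

lemma Bop_zero:
  assumes "av \<noteq> 0"
  shows "Bop a av q1 q0 0 = 0"
  using assms by (intro Bop_eqI) (simp_all add: sact_zero)

lemma Bop_theta_uminus_coroot: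
  fixes av :: "int ^ ('r::finite)"
  assumes "lat_pair a av = 2"
  shows "Bop a av q1 q0 (theta (- av)) =
    - (cst (complex_of_real (q1 - 1)) * theta av + cst (bern_coeff q1 q0))"
proof (rule Bop_eqI)
  show "av \<noteq> 0"
    using assms by (rule coroot_nonzero)
  define A :: "'r grpalg" where "A = cst (complex_of_real (q1 - 1))"
  define D :: "'r grpalg" where "D = cst (bern_coeff q1 q0)"
  define T :: "'r grpalg" where "T = theta av"
  define T' :: "'r grpalg" where "T' = theta (- av)"
  have "T * T' = 1"
    by (simp add: T_def T'_def theta_mult theta_zero)
  have "- av + - av = - ((2::int) *s av)"
    by (simp add: vec_eq_iff)
  then have "bern_den av = 1 - T' * T'"
    by (simp only: bern_den_def T'_def theta_mult theta_zero)
  moreover have "sact a av T' = T"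
  proof -
    have "- av + - av = (- 2) *s av"
      by (simp add: vec_eq_iff)
    then show ?thesis
      using refl_Y_eq_uminus[OF assms] by (simp add: T_def T'_def theta_def sact_single)
  qed
  moreover have "(1 - T' * T') * - (A * T + D) = (A + T' * D) * (T' - T) + (A * T' + D) * (T * T' - 1)"
    by (simp add: algebra_simps)
  ultimately show "bern_den av * - (A * T + D) = bern_num av q1 q0 * (T' - sact a av T')"
    using \<open>T * T' = 1\<close> by (simp add: bern_num_bern_coeff A_def D_def T'_def)
qed

lemma Bop_single_uminus_eq_geometric_sum:
  fixes av :: "int ^ ('r::finite)"
  assumes "lat_pair a av = 2" and "q > 0" and "y + y = int n *s av"
  shows "Bop a av q q (Poly_Mapping.single (- y) c) =
    - (cst (c * complex_of_real (q - 1)) * (\<Sum>j<n. theta (y - int j *s av)))"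
proof (rule Bop_eqI)
  show "av \<noteq> 0"
    using assms(1) by (rule coroot_nonzero)
  define C :: "'r grpalg" where "C = cst c"
  define Q :: "'r grpalg" where "Q = cst (complex_of_real (q - 1))"
  define E :: "'r grpalg" where "E = theta (- av)"
  define S :: "'r grpalg" where "S = (\<Sum>j<n. theta (y - int j *s av))"
  have tele: "(1 - E) * S = theta y - theta (- y)"
  proof -
    have "y - int n *s av = - y"
      using assms(3) by (simp add: vec_eq_iff)
    then show ?thesis
      unfolding E_def S_def by (simp only: theta_geometric_sum)
  qed
  have "- av + - av = - (2 *s av)"
    by (simp add: vec_eq_iff)
  then have den: "bern_den av = 1 - E * E"
    by (simp only: bern_den_def E_def theta_mult theta_zero)
  have num: "bern_num av q q = Q + E * Q"
    using assms(2) by (simp add: bern_num_bern_coeff bern_coeff_diag Q_def E_def mult.commute)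
  have "(- y) + (- y) = (- int n) *s av"
    using assms(3) by (simp add: vec_eq_iff)
  then have diff: "Poly_Mapping.single (- y) c - sact a av (Poly_Mapping.single (- y) c) =
      C * theta (- y) - C * theta y"
    using refl_Y_eq_uminus[OF assms(1)] by (simp add: sact_single C_def cst_theta)
  have "bern_den av * - (C * Q * S) = - ((1 + E) * C * Q * ((1 - E) * S))"
    unfolding den by (simp add: algebra_simps)
  also have "\<dots> = - ((1 + E) * C * Q * (theta y - theta (- y)))"
    by (simp only: tele)
  also have "\<dots> = bern_num av q q * (C * theta (- y) - C * theta y)"
    unfolding num by (simp add: algebra_simps)
  finally show "bern_den av * - (cst (c * complex_of_real (q - 1)) * (\<Sum>j<n. theta (y - int j *s av))) =
      bern_num av q q * (Poly_Mapping.single (- y) c - sact a av (Poly_Mapping.single (- y) c))"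
    by (simp add: diff S_def C_def Q_def cst_def mult_single)
qed

lemma H_mult_H_of_left: "H_mult a av q1 q0 (H_of f) x = (f * fst x, f * snd x)"
  by (simp add: H_mult_def H_of_def split: prod.split)

lemma H_mult_H_of_right:
  assumes "av \<noteq> 0"
  shows "H_mult a av q1 q0 x (H_of h) =
    (fst x * h - snd x * Bop a av q1 q0 (sact a av h), snd x * sact a av h)"
  using assms by (simp add: H_mult_def H_of_def sact_zero Bop_zero split: prod.split)

lemma H_theta_T_theta:
  assumes "lat_pair a av = 2"
  shows "H_mult a av q1 q0 (H_mult a av q1 q0 (H_of (theta av)) H_T) (H_of (theta av)) =
    H_add H_T
      (H_add (H_scale (complex_of_real (q1 - 1)) (H_mult a av q1 q0 (H_of (theta av)) (H_of (theta av))))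
        (H_scale (bern_coeff q1 q0) (H_of (theta av))))"
proof -
  have "av \<noteq> 0"
    using assms by (rule coroot_nonzero)
  have "av + av = 2 *s av"
    by (simp add: vec_eq_iff)
  then have "sact a av (theta av) = theta (- av)"
    using refl_Y_eq_uminus[OF assms] by (simp add: theta_def sact_single)
  moreover have "theta av * theta (- av) = 1"
    by (simp add: theta_mult theta_zero)
  ultimately show ?thesis
    unfolding H_mult_H_of_left H_mult_H_of_right[OF \<open>av \<noteq> 0\<close>]
    by (simp add: Bop_theta_uminus_coroot[OF assms] H_T_def H_add_def H_scale_def H_of_def algebra_simps)
qed

lemma hecke_alg_hom_theta_T_theta:
  assumes hom: "hecke_alg_hom a av q1 q0 a' av' q1' q0' I"
    and "lat_pair a av = 2" and "av' \<noteq> 0"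
    and "I H_T = (b, g)" and "I (H_of (theta av)) = H_of u"
  shows "u * g * sact a' av' u = g"
    and "u * b * u - u * g * Bop a' av' q1' q0' (sact a' av' u) =
      b + cst (complex_of_real (q1 - 1)) * (u * u) + cst (bern_coeff q1 q0) * u"
proof -
  from hom have "I (H_add x y) = H_add (I x) (I y)"
    and "I (H_scale k x) = H_scale k (I x)"
    and "I (H_mult a av q1 q0 x y) = H_mult a' av' q1' q0' (I x) (I y)" for x y k
    unfolding hecke_alg_hom_def by blast+
  then have "H_mult a' av' q1' q0' (H_mult a' av' q1' q0' (H_of u) (b, g)) (H_of u) =
    H_add (b, g) (H_add (H_scale (complex_of_real (q1 - 1)) (H_mult a' av' q1' q0' (H_of u) (H_of u)))
      (H_scale (bern_coeff q1 q0) (H_of u)))"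
    using arg_cong[OF H_theta_T_theta[of a av q1 q0, OF assms(2)], of I] assms(4,5) by simp
  then show "u * g * sact a' av' u = g"
    and "u * b * u - u * g * Bop a' av' q1' q0' (sact a' av' u) =
      b + cst (complex_of_real (q1 - 1)) * (u * u) + cst (bern_coeff q1 q0) * u"
    unfolding H_mult_H_of_left H_mult_H_of_right[OF assms(3)]
    by (simp_all add: H_add_def H_scale_def H_of_def mult.assoc)
qed

lemma hecke_alg_hom_char_eq:
  fixes av' :: "int ^ ('s::finite)"
  assumes hom: "hecke_alg_hom a av q1 q0 a' av' q q I"
    and "lat_pair a av = 2" and "lat_pair a' av' = 2" and "q > 0"
    and "y + y = int n *s av'" and "c' \<noteq> 0"
    and "I H_T = (b, Poly_Mapping.single z c')"
    and "I (H_of (theta av)) = H_of (Poly_Mapping.single y c)"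
    and ch_add: "\<And>x y. ch (x + y) = ch x * ch y" and "ch (- av') = 1" and "ch y * ch y = 1"
  shows "c' * complex_of_real (q - 1) * of_nat n * ch z =
    complex_of_real (q1 - 1) + bern_coeff q1 q0 * c * ch y"
proof -
  define u :: "'s grpalg" where "u = Poly_Mapping.single y c"
  define g :: "'s grpalg" where "g = Poly_Mapping.single z c'"
  define S :: "'s grpalg" where "S = (\<Sum>j<n. theta (y - int j *s av'))"
  have "av' \<noteq> 0"
    using assms(3) by (rule coroot_nonzero)
  have su: "sact a' av' u = Poly_Mapping.single (- y) c"
    using refl_Y_eq_uminus[OF assms(3,5)] by (simp add: u_def sact_single)
  have "u * g * Poly_Mapping.single (- y) c = g"
    and "u * b * u + u * g * (cst (c * complex_of_real (q - 1)) * S) =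
      b + cst (complex_of_real (q1 - 1)) * (u * u) + cst (bern_coeff q1 q0) * u"
    using hecke_alg_hom_theta_T_theta[OF hom assms(2) \<open>av' \<noteq> 0\<close> assms(7,8)[folded u_def g_def]]
    by (simp_all add: su Bop_single_uminus_eq_geometric_sum[OF assms(3,4,5)] S_def)
  from this(1) have "char_eval (\<lambda>_. 1) (u * g * Poly_Mapping.single (- y) c) = char_eval (\<lambda>_. 1) g"
    by simp
  then have "c * c' * c = c'"
    by (simp add: char_eval_mult char_eval_single u_def g_def)
  with \<open>c' \<noteq> 0\<close> have "c * c = 1"
    by (metis mult.commute mult.left_commute mult_cancel_left1)
  have "ch 0 = 1"
    using ch_add[of "- av'" 0] assms(10) by simp
  from \<open>u * b * u + _ = _\<close> have "char_eval ch (u * b * u + u * g * (cst (c * complex_of_real (q - 1)) * S)) =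
      char_eval ch (b + cst (complex_of_real (q1 - 1)) * (u * u) + cst (bern_coeff q1 q0) * u)"
    by simp
  then have "c * ch y * char_eval ch b * (c * ch y) +
      c * ch y * (c' * ch z) * (c * complex_of_real (q - 1) * (of_nat n * ch y)) =
      char_eval ch b + complex_of_real (q1 - 1) * (c * ch y * (c * ch y)) + bern_coeff q1 q0 * (c * ch y)"
    using \<open>ch 0 = 1\<close>
    by (simp add: char_eval_mult[OF ch_add] char_eval_add char_eval_single u_def g_def cst_def
        char_eval_theta_geometric_sum[OF ch_add assms(10)] S_def)
  then show ?thesis
    using \<open>c * c = 1\<close> \<open>ch y * ch y = 1\<close> by algebra
qed

lemma hecke_alg_hom_odd_coroot_False:
  fixes av' :: "int ^ ('s::finite)"
  assumes hom: "hecke_alg_hom a av q1 q0 a' av' q q I"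
    and "lat_pair a av = 2" and "lat_pair a' av' = 2"
    and "q1 > 1" and "q0 > 1" and "q > 0" and "c \<noteq> 0" and "c' \<noteq> 0"
    and "yk + yk = K *s av'" and "odd N" and "N > 0" and "yn + yn = N *s av'"
    and "I H_T = (b, Poly_Mapping.single yk c')"
    and "I (H_of (theta av)) = H_of (Poly_Mapping.single yn c)"
  shows False
proof -
  have yn: "yn + yn = int (nat N) *s av'"
    using assms(11,12) by simp
  note char_eq = hecke_alg_hom_char_eq[OF hom assms(2,3,6) yn assms(8,13,14)]
  have "c' * complex_of_real (q - 1) * of_nat (nat N) = complex_of_real (q1 - 1) + bern_coeff q1 q0 * c"
    using char_eq[of "\<lambda>_. 1"] by simp
  moreover have "lat_pair a' yn = N"
    using lat_pair_half[OF assms(3,12)] .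
  then have "c' * complex_of_real (q - 1) * of_nat (nat N) * parity_char a' yk =
      complex_of_real (q1 - 1) - bern_coeff q1 q0 * c"
    using char_eq[of "parity_char a'", OF parity_char_add] assms(3) \<open>odd N\<close>
    by (simp add: parity_char_def lat_pair_uminus_right)
  moreover have "bern_coeff q1 q0 \<noteq> 0"
    using assms(4,5) by (intro bern_coeff_nonzero) simp_all
  moreover have "lat_pair a' yk = K"
    using lat_pair_half[OF assms(3,9)] .
  ultimately show False
    using \<open>q1 > 1\<close> \<open>c \<noteq> 0\<close> by (cases "even K") (auto simp: parity_char_def)
qed

theorem lemmaD3:
  fixes a av :: "int ^ ('r::finite)" and a' av' :: "int ^ ('s::finite)"
    and qq lam lamS lam' lamS' :: real
  assumes "lat_pair a av = 2" and "lat_pair a' av' = 2"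
    and "qq > 1"
    and "lam > 0" and "lamS > 0" and "lam' > 0" and "lamS' > 0"
    and "\<not> (\<exists>x. a = x + x) \<Longrightarrow> lam = lamS"
    and "\<not> (\<exists>x. a' = x + x) \<Longrightarrow> lam' = lamS'"
  shows "\<not> (\<exists>I c c' (K::int) (N::int) yk yn b'.
            hecke_alg_hom a av (qq powr lam) (qq powr lamS) a' av' (qq powr lam') (qq powr lamS') I
          \<and> c \<noteq> 0 \<and> c' \<noteq> 0
          \<and> yk + yk = K *s av'
          \<and> odd N \<and> N > 0 \<and> yn + yn = N *s av'
          \<and> I H_T = H_add (H_mult a' av' (qq powr lam') (qq powr lamS') (H_of (cst c' * theta yk)) H_T)
                          (H_of b')
          \<and> I (H_of (theta av)) = H_of (cst c * theta yn))"
proof (intro notI, elim exE conjE)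
  fix I c c' K N yk yn b'
  assume hom: "hecke_alg_hom a av (qq powr lam) (qq powr lamS) a' av' (qq powr lam') (qq powr lamS') I"
    and c: "c \<noteq> 0" and c': "c' \<noteq> 0" and yk: "yk + yk = K *s av'"
    and N: "odd N" "N > 0" and yn: "yn + yn = N *s av'"
    and IT: "I H_T = H_add (H_mult a' av' (qq powr lam') (qq powr lamS') (H_of (cst c' * theta yk)) H_T)
      (H_of b')"
    and Itheta: "I (H_of (theta av)) = H_of (cst c * theta yn)"
  have q_gt_1: "qq powr l > 1" if "l > 0" for l
    using assms(3) that powr_less_mono[of 0 l qq] by simp
  have "lat_pair a' yn = N"
    using lat_pair_half[OF assms(2) yn] .
  then have "lamS' = lam'"
    using not_double_if_lat_pair_odd N assms(9) by metis
  have IT': "I H_T = (b', Poly_Mapping.single yk c')"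
    using IT unfolding H_mult_H_of_left by (simp add: H_of_def H_T_def H_add_def cst_theta)
  have Itheta': "I (H_of (theta av)) = H_of (Poly_Mapping.single yn c)"
    using Itheta by (simp add: cst_theta)
  have "qq powr lam' > 0"
    using assms(3) by simp
  from hecke_alg_hom_odd_coroot_False[OF hom[unfolded \<open>lamS' = lam'\<close>] assms(1,2)
      q_gt_1[OF assms(4)] q_gt_1[OF assms(5)] this c c' yk N yn IT' Itheta']
  show False .
qed

end
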